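(* Let $P'$ be a finite totally ordered subset of $\mathbb{Q}$ with minimum $0$ and maximum $n$ that contains $\{0,1,\dots,n\}$, and let $L'=P'\times P'$, $L_n=\{0,\dots,n\}^2$ (product orders). Let $g:L_n\to L'$ be the inclusion and $f:L'\to L_n$, $f(a_1,a_2)=(\lceil a_1\rceil,\lceil a_2\rceil)$. Let $F:L'\to\Delta K$ and $G:L_n\to\Delta K$ be filtrations with $G=F\circ g$. Then for any $x\le y$ in $L_n$ and every dimension $q$, \[\mathsf{Dgm}_qG[x,y]=\sum_{[a,b]\in\mathsf{Int}\,L',\ f(a)=x,\ f(b)=y}\mathsf{Dgm}_qF[a,b].\]
   Context: $K$ is a finite simplicial complex, coefficients in a field; $\Delta K$ is the poset of subcomplexes of $K$. For a finite poset $P$ with least element $\bot$ and greatest $\top$: $\mathsf{Int}\,P=\{[a,b]:a\le b\}$ with $[a,b]\le[c,d]$ iff $a\le c$, $b\le d$; a $P$-filtration is a monotone map $F:P\to\Delta K$ with $F(\bot)=\emptyset$, $F(\top)=K$; $ZB_qF[a,b]=\dim(Z_qF(a)\cap B_qF(b))$ for $b\ne\top$ and $\dim Z_qF(a)$ for $b=\top$ ($Z_q,B_q$ = $q$-cycles, $q$-boundaries); $\mathsf{Dgm}_qF$ is the unique function on $\mathsf{Int}\,P$ with $ZB_qF[c,d]=\sum_{[a,b]\le[c,d]}\mathsf{Dgm}_qF[a,b]$. *)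

theory Defs
  imports Complex_Main "HOL-Library.Function_Algebras"
begin

text \<open>Vertices carry a linear order,
used only to orient simplices.\<close>

definition simplicial_complex :: "'v set set \<Rightarrow> bool" where
  "simplicial_complex K \<longleftrightarrow> finite K \<and>
     (\<forall>\<sigma>\<in>K. finite \<sigma> \<and> \<sigma> \<noteq> {}) \<and>
     (\<forall>\<sigma>\<in>K. \<forall>\<tau>. \<tau> \<subseteq> \<sigma> \<and> \<tau> \<noteq> {} \<longrightarrow> \<tau> \<in> K)"

definition subcomplex :: "'v set set \<Rightarrow> 'v set set \<Rightarrow> bool" where
  "subcomplex K L \<longleftrightarrow> L \<subseteq> K \<and> (\<forall>\<sigma>\<in>L. \<forall>\<tau>. \<tau> \<subseteq> \<sigma> \<and> \<tau> \<noteq> {} \<longrightarrow> \<tau> \<in> L)"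

definition chains :: "'v set set \<Rightarrow> nat \<Rightarrow> ('v set \<Rightarrow> 'k::field) set" where
  "chains L q = {c. \<forall>\<sigma>. c \<sigma> \<noteq> 0 \<longrightarrow> \<sigma> \<in> L \<and> card \<sigma> = Suc q}"

text \<open>Orientation sign of the face \<sigma> - {w}: (-1)^i where w is the i-th vertex of \<sigma>
(counted from 0 in increasing order).\<close>
definition face_sign :: "'v::linorder set \<Rightarrow> 'v set \<Rightarrow> 'k::field" where
  "face_sign \<sigma> \<tau> = (-1) ^ card {v\<in>\<sigma>. v < the_elem (\<sigma> - \<tau>)}"

text \<open>Simplicial boundary operator of K (non-augmented: boundary of a vertex is 0).\<close>
definition bdry :: "'v::linorder set set \<Rightarrow> ('v set \<Rightarrow> 'k::field) \<Rightarrow> ('v set \<Rightarrow> 'k)" where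
  "bdry K c = (\<lambda>\<tau>. if \<tau> \<in> K then
      (\<Sum>\<sigma>\<in>{\<sigma>\<in>K. \<tau> \<subseteq> \<sigma> \<and> card \<sigma> = Suc (card \<tau>)}. face_sign \<sigma> \<tau> * c \<sigma>)
     else 0)"

definition cycles :: "'v::linorder set set \<Rightarrow> 'v set set \<Rightarrow> nat \<Rightarrow> ('v set \<Rightarrow> 'k::field) set" where
  "cycles K L q = {c \<in> chains L q. bdry K c = 0}"

definition boundaries :: "'v::linorder set set \<Rightarrow> 'v set set \<Rightarrow> nat \<Rightarrow> ('v set \<Rightarrow> 'k::field) set" where
  "boundaries K L q = bdry K ` chains L (Suc q)"

definition chain_dim :: "'k::field itself \<Rightarrow> ('v set \<Rightarrow> 'k) set \<Rightarrow> nat" where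
  "chain_dim T V = vector_space.dim (\<lambda>(a::'k) (c::'v set \<Rightarrow> 'k) x. a * c x) V"

definition intervals :: "'p set \<Rightarrow> ('p \<Rightarrow> 'p \<Rightarrow> bool) \<Rightarrow> ('p \<times> 'p) set" where
  "intervals P le = {(a, b). a \<in> P \<and> b \<in> P \<and> le a b}"

definition filtration ::
  "'p set \<Rightarrow> ('p \<Rightarrow> 'p \<Rightarrow> bool) \<Rightarrow> 'p \<Rightarrow> 'p \<Rightarrow> 'v set set \<Rightarrow> ('p \<Rightarrow> 'v set set) \<Rightarrow> bool" where
  "filtration P le bt tp K F \<longleftrightarrow>
     (\<forall>a\<in>P. subcomplex K (F a)) \<and>
     (\<forall>a\<in>P. \<forall>b\<in>P. le a b \<longrightarrow> F a \<subseteq> F b) \<and>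
     F bt = {} \<and> F tp = K"

definition ZB :: "'k::field itself \<Rightarrow> 'p \<Rightarrow> 'v::linorder set set \<Rightarrow> ('p \<Rightarrow> 'v set set)
    \<Rightarrow> nat \<Rightarrow> 'p \<times> 'p \<Rightarrow> nat" where
  "ZB T tp K F q ab =
     (if snd ab = tp then chain_dim T (cycles K (F (fst ab)) q :: ('v set \<Rightarrow> 'k) set)
      else chain_dim T (cycles K (F (fst ab)) q \<inter> boundaries K (F (snd ab)) q :: ('v set \<Rightarrow> 'k) set))"

definition Dgm :: "'k::field itself \<Rightarrow> 'p set \<Rightarrow> ('p \<Rightarrow> 'p \<Rightarrow> bool) \<Rightarrow> 'p
    \<Rightarrow> 'v::linorder set set \<Rightarrow> ('p \<Rightarrow> 'v set set) \<Rightarrow> nat \<Rightarrow> 'p \<times> 'p \<Rightarrow> int" where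
  "Dgm T P le tp K F q = (THE m.
     (\<forall>cd\<in>intervals P le. int (ZB T tp K F q cd) =
        (\<Sum>ab\<in>{ab\<in>intervals P le. le (fst ab) (fst cd) \<and> le (snd ab) (snd cd)}. m ab)) \<and>
     (\<forall>ab. ab \<notin> intervals P le \<longrightarrow> m ab = 0))"

definition pair_le :: "('a::order \<times> 'a) \<Rightarrow> ('a \<times> 'a) \<Rightarrow> bool" where
  "pair_le x y \<longleftrightarrow> fst x \<le> fst y \<and> snd x \<le> snd y"

end

theory Submission
  imports Defs "HOL-Library.Product_Order"
begin

text \<open>Dgm is the Moebius inverse of ZB on the poset of intervals. The ceiling map f and the
inclusion g form a Galois connection, f a \<le> c \<longleftrightarrow> a \<le> g c, and so do the maps they induce
on intervals. Since ZB of G is ZB of F precomposed with g, pushing the Moebius inverse of ZB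
of F forward along f yields a function whose down-set sums are the ZB numbers of G; by
uniqueness of Moebius inversion it is Dgm of G.\<close>

definition mobius_inverse :: "'a::order set \<Rightarrow> ('a \<Rightarrow> int) \<Rightarrow> 'a \<Rightarrow> int" where
  "mobius_inverse S Z = (THE m. (\<forall>c\<in>S. Z c = (\<Sum>a\<in>{a\<in>S. a \<le> c}. m a)) \<and> (\<forall>a. a \<notin> S \<longrightarrow> m a = 0))"

lemma sum_downsets_eq_0_imp_eq_0:
  fixes d :: "'a::order \<Rightarrow> int"
  assumes "finite S" and sums: "\<forall>c\<in>S. (\<Sum>a\<in>{a\<in>S. a \<le> c}. d a) = 0" and "a \<in> S"
  shows "d a = 0"
proof (rule ccontr)
  assume "d a \<noteq> 0"
  then obtain c where c: "c \<in> S" "d c \<noteq> 0" and min: "\<forall>b\<in>S. d b \<noteq> 0 \<longrightarrow> b \<le> c \<longrightarrow> c = b"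
    using finite_has_minimal[of "{b\<in>S. d b \<noteq> 0}"] \<open>finite S\<close> \<open>a \<in> S\<close> by auto
  have "{b\<in>S. b \<le> c} = insert c {b\<in>S. b < c}"
    using c(1) by auto
  moreover have "\<forall>b\<in>{b\<in>S. b < c}. d b = 0"
    using min by fastforce
  ultimately have "(\<Sum>b\<in>{b\<in>S. b \<le> c}. d b) = d c"
    using \<open>finite S\<close> by simp
  with sums c show False
    by simp
qed

lemma mobius_inverse_exists:
  fixes Z :: "'a::order \<Rightarrow> int"
  assumes "finite S"
  shows "\<exists>m. (\<forall>c\<in>S. Z c = (\<Sum>a\<in>{a\<in>S. a \<le> c}. m a)) \<and> (\<forall>a. a \<notin> S \<longrightarrow> m a = 0)"
  using assms
proof (induction S rule: finite_remove_induct)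
  case empty
  show ?case
    by (intro exI[of _ "\<lambda>_. 0"]) simp
next
  case (remove S)
  obtain t where t: "t \<in> S" "\<forall>b\<in>S. t \<le> b \<longrightarrow> t = b"
    using finite_has_maximal[OF remove(1,2)] by blast
  then obtain m where m: "\<forall>c\<in>S - {t}. Z c = (\<Sum>a\<in>{a\<in>S - {t}. a \<le> c}. m a)"
    "\<forall>a. a \<notin> S - {t} \<longrightarrow> m a = 0"
    using remove(4) by blast
  \<comment> \<open>Only the value at the maximal element t is new; it is forced by the relation at t.\<close>
  define m' where "m' = m(t := Z t - (\<Sum>a\<in>{a\<in>S - {t}. a \<le> t}. m a))"
  have sum_m': "(\<Sum>a\<in>{a\<in>S - {t}. a \<le> c}. m' a) = (\<Sum>a\<in>{a\<in>S - {t}. a \<le> c}. m a)" for c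
    by (rule sum.cong) (auto simp: m'_def)
  have "Z c = (\<Sum>a\<in>{a\<in>S. a \<le> c}. m' a)" if "c \<in> S" for c
  proof (cases "c = t")
    case True
    have "{a\<in>S. a \<le> t} = insert t {a\<in>S - {t}. a \<le> t}"
      using t by auto
    then show ?thesis
      using remove(1) True sum_m' by (simp add: m'_def)
  next
    case False
    have "{a\<in>S. a \<le> c} = {a\<in>S - {t}. a \<le> c}"
      using that False t by auto
    then show ?thesis
      using m(1) that False sum_m' by simp
  qed
  moreover have "\<forall>a. a \<notin> S \<longrightarrow> m' a = 0"
    using m(2) t(1) by (auto simp: m'_def)
  ultimately show ?case
    by blast
qed

lemma mobius_inverse_eqI:
  assumes "finite S"
    and sums: "\<forall>c\<in>S. Z c = (\<Sum>a\<in>{a\<in>S. a \<le> c}. m a)" and outside: "\<forall>a. a \<notin> S \<longrightarrow> m a = 0"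
  shows "mobius_inverse S Z = m"
  unfolding mobius_inverse_def
proof (rule the_equality)
  fix m' assume m': "(\<forall>c\<in>S. Z c = (\<Sum>a\<in>{a\<in>S. a \<le> c}. m' a)) \<and> (\<forall>a. a \<notin> S \<longrightarrow> m' a = 0)"
  have "\<forall>c\<in>S. (\<Sum>a\<in>{a\<in>S. a \<le> c}. m' a - m a) = 0"
    using m' sums by (simp add: sum_subtractf)
  then have "m' a = m a" if "a \<in> S" for a
    using sum_downsets_eq_0_imp_eq_0[OF \<open>finite S\<close>] that by fastforce
  then show "m' = m"
    using m' outside by fastforce
qed (use sums outside in blast)

lemma sum_downset_mobius_inverse:
  assumes "finite S" and "c \<in> S"
  shows "(\<Sum>a\<in>{a\<in>S. a \<le> c}. mobius_inverse S Z a) = Z c"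
proof -
  obtain m where m: "\<forall>c\<in>S. Z c = (\<Sum>a\<in>{a\<in>S. a \<le> c}. m a)" "\<forall>a. a \<notin> S \<longrightarrow> m a = 0"
    using mobius_inverse_exists[OF \<open>finite S\<close>] by blast
  then show ?thesis
    using mobius_inverse_eqI[OF \<open>finite S\<close> m] \<open>c \<in> S\<close> by simp
qed

lemma mobius_inverse_galois_pushforward:
  fixes \<phi> :: "'a::order \<Rightarrow> 'b::order" and \<psi> :: "'b \<Rightarrow> 'a"
  assumes "finite S" and "finite T" and "\<phi> ` S \<subseteq> T" and "\<psi> ` T \<subseteq> S"
    and galois: "\<And>s t. s \<in> S \<Longrightarrow> t \<in> T \<Longrightarrow> \<phi> s \<le> t \<longleftrightarrow> s \<le> \<psi> t"
    and "t \<in> T"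
  shows "mobius_inverse T (Z \<circ> \<psi>) t = (\<Sum>s\<in>{s\<in>S. \<phi> s = t}. mobius_inverse S Z s)"
proof -
  define m where "m t = (if t \<in> T then (\<Sum>s\<in>{s\<in>S. \<phi> s = t}. mobius_inverse S Z s) else 0)" for t
  have "(Z \<circ> \<psi>) c = (\<Sum>t\<in>{t\<in>T. t \<le> c}. m t)" if "c \<in> T" for c
  proof -
    have "(\<Sum>t\<in>{t\<in>T. t \<le> c}. m t)
        = (\<Sum>t\<in>{t\<in>T. t \<le> c}. \<Sum>s\<in>{s\<in>{s\<in>S. \<phi> s \<le> c}. \<phi> s = t}. mobius_inverse S Z s)"
      by (intro sum.cong) (auto simp: m_def intro!: sum.cong)
    also have "\<dots> = (\<Sum>s\<in>{s\<in>S. \<phi> s \<le> c}. mobius_inverse S Z s)"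
      using \<open>finite S\<close> \<open>finite T\<close> \<open>\<phi> ` S \<subseteq> T\<close> by (intro sum.group) auto
    also have "{s\<in>S. \<phi> s \<le> c} = {s\<in>S. s \<le> \<psi> c}"
      using galois \<open>c \<in> T\<close> by blast
    also have "(\<Sum>s\<in>{s\<in>S. s \<le> \<psi> c}. mobius_inverse S Z s) = (Z \<circ> \<psi>) c"
      using sum_downset_mobius_inverse[OF \<open>finite S\<close>] \<open>\<psi> ` T \<subseteq> S\<close> \<open>c \<in> T\<close> by auto
    finally show ?thesis ..
  qed
  then have "mobius_inverse T (Z \<circ> \<psi>) = m"
    using \<open>finite T\<close> by (intro mobius_inverse_eqI) (auto simp: m_def)
  then show ?thesis
    using \<open>t \<in> T\<close> by (simp add: m_def)
qed

lemma mobius_inverse_cong: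
  assumes "\<And>c. c \<in> S \<Longrightarrow> Z c = Z' c"
  shows "mobius_inverse S Z = mobius_inverse S Z'"
  unfolding mobius_inverse_def using assms by simp

lemma pair_le_eq_less_eq: "pair_le = (\<le>)"
  by (auto simp: fun_eq_iff pair_le_def less_eq_prod_def)

lemma finite_intervals: "finite P \<Longrightarrow> finite (intervals P le)"
  by (rule finite_subset[of _ "P \<times> P"]) (auto simp: intervals_def)

lemma Dgm_eq_mobius_inverse:
  fixes P :: "'p::order set"
  shows "Dgm T P (\<le>) tp K F q = mobius_inverse (intervals P (\<le>)) (\<lambda>ab. int (ZB T tp K F q ab))"
proof -
  have "{ab\<in>intervals P (\<le>). fst ab \<le> fst cd \<and> snd ab \<le> snd cd} = {ab\<in>intervals P (\<le>). ab \<le> cd}"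
    for cd :: "'p \<times> 'p"
    by (auto simp: less_eq_prod_def)
  then show ?thesis
    by (simp add: Dgm_def mobius_inverse_def)
qed

lemma ZB_comp:
  assumes "G (fst cd) = F (g (fst cd))" and "G (snd cd) = F (g (snd cd))"
    and "snd cd = tp \<longleftrightarrow> g (snd cd) = tp'"
  shows "ZB T tp K G q cd = ZB T tp' K F q (map_prod g g cd)"
  using assms by (cases cd) (simp add: ZB_def)

lemma Dgm_galois_pushforward:
  fixes f :: "'p::order \<Rightarrow> 'r::order" and g :: "'r \<Rightarrow> 'p"
  assumes "finite P" and "finite R" and "f ` P \<subseteq> R" and "g ` R \<subseteq> P"
    and galois: "\<And>a c. a \<in> P \<Longrightarrow> c \<in> R \<Longrightarrow> f a \<le> c \<longleftrightarrow> a \<le> g c"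
    and restrict: "\<forall>z\<in>R. G z = F (g z)" and top: "\<forall>z\<in>R. z = tp \<longleftrightarrow> g z = tp'"
    and "(x, y) \<in> intervals R (\<le>)"
  shows "Dgm T R (\<le>) tp K G q (x, y) =
    (\<Sum>ab\<in>{ab\<in>intervals P (\<le>). map_prod f f ab = (x, y)}. Dgm T P (\<le>) tp' K F q ab)"
proof -
  have f_mono: "f a \<le> f b" if "a \<in> P" "b \<in> P" "a \<le> b" for a b
    using that galois[of b "f b"] galois[of a "f b"] \<open>f ` P \<subseteq> R\<close> order_trans by blast
  have g_mono: "g c \<le> g d" if "c \<in> R" "d \<in> R" "c \<le> d" for c d
    using that galois[of "g c" c] galois[of "g c" d] \<open>g ` R \<subseteq> P\<close> order_trans by blast
  have "map_prod f f ` intervals P (\<le>) \<subseteq> intervals R (\<le>)"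
    using \<open>f ` P \<subseteq> R\<close> f_mono by (auto simp: intervals_def)
  moreover have "map_prod g g ` intervals R (\<le>) \<subseteq> intervals P (\<le>)"
    using \<open>g ` R \<subseteq> P\<close> g_mono by (auto simp: intervals_def)
  moreover have "map_prod f f ab \<le> cd \<longleftrightarrow> ab \<le> map_prod g g cd"
    if "ab \<in> intervals P (\<le>)" "cd \<in> intervals R (\<le>)" for ab cd
    using that galois by (cases ab, cases cd) (auto simp: intervals_def less_eq_prod_def)
  ultimately have pushforward: "mobius_inverse (intervals R (\<le>)) (Z \<circ> map_prod g g) (x, y) =
      (\<Sum>ab\<in>{ab\<in>intervals P (\<le>). map_prod f f ab = (x, y)}. mobius_inverse (intervals P (\<le>)) Z ab)"
    for Z
    using finite_intervals[OF \<open>finite P\<close>] finite_intervals[OF \<open>finite R\<close>] \<open>(x, y) \<in> intervals R (\<le>)\<close>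
    by (intro mobius_inverse_galois_pushforward) auto
  have "int (ZB T tp K G q cd) = int (ZB T tp' K F q (map_prod g g cd))"
    if "cd \<in> intervals R (\<le>)" for cd
    using that restrict top by (intro arg_cong[of _ _ int] ZB_comp) (auto simp: intervals_def)
  then have "Dgm T R (\<le>) tp K G q =
      mobius_inverse (intervals R (\<le>)) ((\<lambda>ab. int (ZB T tp' K F q ab)) \<circ> map_prod g g)"
    unfolding Dgm_eq_mobius_inverse by (intro mobius_inverse_cong) simp
  then show ?thesis
    using pushforward by (simp add: Dgm_eq_mobius_inverse)
qed

lemma nat_ceiling_pair_le_iff:
  fixes a :: "'a::floor_ceiling \<times> 'a"
  shows "map_prod (\<lambda>a. nat \<lceil>a\<rceil>) (\<lambda>a. nat \<lceil>a\<rceil>) a \<le> c \<longleftrightarrow> a \<le> map_prod of_nat of_nat c"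
  by (cases a, cases c) (simp add: nat_le_iff ceiling_le_iff)

theorem mainTheorem8:
  fixes P' :: "rat set" and n :: nat and K :: "'v::linorder set set"
    and F :: "rat \<times> rat \<Rightarrow> 'v set set" and G :: "nat \<times> nat \<Rightarrow> 'v set set"
    and q :: nat and x y :: "nat \<times> nat"
  assumes "finite P'"
    and "0 \<in> P'" and "of_nat n \<in> P'" and "\<forall>a\<in>P'. 0 \<le> a \<and> a \<le> of_nat n"
    and "\<forall>i\<le>n. (of_nat i :: rat) \<in> P'"
    and "simplicial_complex K"
    and "filtration (P' \<times> P') pair_le (0, 0) (of_nat n, of_nat n) K F"
    and "filtration ({0..n} \<times> {0..n}) pair_le (0, 0) (n, n) K G"
    and "\<forall>z\<in>{0..n} \<times> {0..n}. G z = F (of_nat (fst z), of_nat (snd z))"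
    and "x \<in> {0..n} \<times> {0..n}" and "y \<in> {0..n} \<times> {0..n}" and "pair_le x y"
  shows "Dgm TYPE('k::field) ({0..n} \<times> {0..n}) pair_le (n, n) K G q (x, y) =
    (\<Sum>ab\<in>{ab\<in>intervals (P' \<times> P') pair_le.
              (nat \<lceil>fst (fst ab)\<rceil>, nat \<lceil>snd (fst ab)\<rceil>) = x \<and>
              (nat \<lceil>fst (snd ab)\<rceil>, nat \<lceil>snd (snd ab)\<rceil>) = y}.
       Dgm TYPE('k) (P' \<times> P') pair_le (of_nat n, of_nat n) K F q ab)"
proof -
  define f :: "rat \<times> rat \<Rightarrow> nat \<times> nat" where "f = map_prod (\<lambda>a. nat \<lceil>a\<rceil>) (\<lambda>a. nat \<lceil>a\<rceil>)"
  define g :: "nat \<times> nat \<Rightarrow> rat \<times> rat" where "g = map_prod of_nat of_nat"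
  have galois: "f a \<le> c \<longleftrightarrow> a \<le> g c" for a c
    unfolding f_def g_def by (rule nat_ceiling_pair_le_iff)
  have "f a \<le> (n, n)" if "a \<in> P' \<times> P'" for a
    using that assms(4) galois[of a "(n, n)"] by (cases a) (simp add: g_def less_eq_prod_def)
  then have "f ` (P' \<times> P') \<subseteq> {0..n} \<times> {0..n}"
    by (auto simp: image_subset_iff mem_Times_iff less_eq_prod_def)
  moreover have "g ` ({0..n} \<times> {0..n}) \<subseteq> P' \<times> P'"
    using assms(5) by (auto simp: g_def)
  moreover have "\<forall>z\<in>{0..n} \<times> {0..n}. z = (n, n) \<longleftrightarrow> g z = (of_nat n, of_nat n)"
    by (auto simp: g_def)
  moreover have "(x, y) \<in> intervals ({0..n} \<times> {0..n}) (\<le>)"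
    using assms(10-12) by (simp add: intervals_def pair_le_eq_less_eq)
  ultimately have "Dgm TYPE('k) ({0..n} \<times> {0..n}) (\<le>) (n, n) K G q (x, y) =
      (\<Sum>ab\<in>{ab\<in>intervals (P' \<times> P') (\<le>). map_prod f f ab = (x, y)}.
         Dgm TYPE('k) (P' \<times> P') (\<le>) (of_nat n, of_nat n) K F q ab)"
    using assms(1,9) galois
    by (intro Dgm_galois_pushforward) (auto simp: g_def)
  moreover have "map_prod f f ab = (x, y) \<longleftrightarrow>
      (nat \<lceil>fst (fst ab)\<rceil>, nat \<lceil>snd (fst ab)\<rceil>) = x \<and> (nat \<lceil>fst (snd ab)\<rceil>, nat \<lceil>snd (snd ab)\<rceil>) = y"
    for ab
    by (simp add: f_def map_prod_def split_beta)
  ultimately show ?thesis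
    by (simp only: pair_le_eq_less_eq)
qed

end
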